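(* Let $A\in\{\mathbb Z,\mathbb R\}$ and let $K,X\subset\mathbb R^d$ be $d$-dimensional convex bodies. If $K$ is $A$-$X$-free and inclusion-maximal among $A$-$X$-free convex bodies, then $K$ contains an $A$-unimodular copy of $X$.
   Context: A convex body is a nonempty compact convex subset of $\mathbb R^d$. An $A$-unimodular transformation is a map $T(x)=Mx+b$ with $M\in \mathrm{GL}_d(\mathbb Z)$ and $b\in A^d$; an $A$-unimodular copy of $X$ is $T(X)$ for such a $T$. A convex set is $A$-$X$-free if its relative interior contains no $A$-unimodular copy of $X$. *)

theory Defs
  imports "HOL-Analysis.Analysis"
begin

definition convex_body :: "(real^'n) set \<Rightarrow> bool" where
  "convex_body K \<longleftrightarrow> K \<noteq> {} \<and> compact K \<and> convex K"

definition GL_int :: "real^'n^'n \<Rightarrow> bool" where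
  "GL_int M \<longleftrightarrow> (\<forall>i j. M $ i $ j \<in> \<int>) \<and> (det M = 1 \<or> det M = -1)"

definition unimod_copy :: "real set \<Rightarrow> (real^'n) set \<Rightarrow> (real^'n) set \<Rightarrow> bool" where
  "unimod_copy A X Y \<longleftrightarrow>
     (\<exists>M b. GL_int M \<and> (\<forall>i. b $ i \<in> A) \<and> Y = (\<lambda>x. M *v x + b) ` X)"

definition X_free :: "real set \<Rightarrow> (real^'n) set \<Rightarrow> (real^'n) set \<Rightarrow> bool" where
  "X_free A X K \<longleftrightarrow> convex K \<and> \<not> (\<exists>Y. unimod_copy A X Y \<and> Y \<subseteq> rel_interior K)"

end

theory Submission
  imports Defs
begin

(* Every parallel body K + d B with d > 0 is a convex body strictly containing K, so by
   maximality it is not X-free: some A-unimodular copy T_d(X) lies in K + d B. Since X has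
   interior points, the maps T_d with T_d(X) bounded form a bounded set, and the A-unimodular
   maps form a closed set because A is closed. Compactness therefore yields a single
   A-unimodular map T with T(X) in K + d B for every d > 0, i.e. T(X) in K as K is closed. *)

definition parallel_body :: "'a::euclidean_space set \<Rightarrow> real \<Rightarrow> 'a set" where
  "parallel_body K d = (\<Union>k\<in>K. \<Union>e\<in>cball 0 d. {k + e})"

lemma compact_parallel_body: "compact K \<Longrightarrow> compact (parallel_body K d)"
  unfolding parallel_body_def by (intro compact_sums' compact_cball)

lemma convex_parallel_body: "convex K \<Longrightarrow> convex (parallel_body K d)"
  unfolding parallel_body_def by (intro convex_sums convex_cball)

lemma subset_parallel_body: "d \<ge> 0 \<Longrightarrow> K \<subseteq> parallel_body K d"
  unfolding parallel_body_def by force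

lemma parallel_body_mono: "d \<le> d' \<Longrightarrow> parallel_body K d \<subseteq> parallel_body K d'"
  unfolding parallel_body_def by (intro UN_mono subset_cball order_refl)

lemma parallel_body_subset_cball:
  assumes "K \<subseteq> cball 0 R"
  shows "parallel_body K d \<subseteq> cball 0 (R + d)"
proof
  fix y assume "y \<in> parallel_body K d"
  then obtain k e where "k \<in> K" "norm e \<le> d" "y = k + e" by (auto simp: parallel_body_def)
  then show "y \<in> cball 0 (R + d)"
    using assms norm_triangle_ineq[of k e] by auto
qed

lemma infdist_le_if_mem_parallel_body:
  assumes "y \<in> parallel_body K d"
  shows "infdist y K \<le> d"
proof -
  obtain k e where "k \<in> K" "norm e \<le> d" "y = k + e"
    using assms by (auto simp: parallel_body_def)
  then show ?thesis using infdist_le[of k K y] by (simp add: dist_norm)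
qed

lemma Inter_parallel_bodies:
  assumes "closed K"
  shows "(\<Inter>n. parallel_body K (inverse (Suc n))) = K"
proof
  show "K \<subseteq> (\<Inter>n. parallel_body K (inverse (Suc n)))"
    by (simp add: INT_greatest subset_parallel_body)
  show "(\<Inter>n. parallel_body K (inverse (Suc n))) \<subseteq> K"
  proof
    fix y assume y: "y \<in> (\<Inter>n. parallel_body K (inverse (Suc n)))"
    then have "y \<in> parallel_body K (inverse (Suc 0))" by (rule INT_D) simp
    then have "K \<noteq> {}" by (auto simp: parallel_body_def)
    have "infdist y K \<le> 0"
    proof (rule ccontr)
      assume "\<not> infdist y K \<le> 0"
      then have "0 < infdist y K" by simp
      then obtain n where n: "inverse (Suc n) < infdist y K" using reals_Archimedean by blast
      have "infdist y K \<le> inverse (Suc n)"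
        using y by (intro infdist_le_if_mem_parallel_body) blast
      with n show False by linarith
    qed
    then show "y \<in> K"
      using in_closed_iff_infdist_zero[OF assms \<open>K \<noteq> {}\<close>] infdist_nonneg order.antisym by blast
  qed
qed

lemma parallel_body_neq_self:
  fixes K :: "'a::euclidean_space set"
  assumes "compact K" "K \<noteq> {}" "d > 0"
  shows "parallel_body K d \<noteq> K"
proof -
  obtain u :: 'a where u: "u \<in> Basis" using nonempty_Basis by blast
  have "continuous_on K (\<lambda>y. y \<bullet> u)" by (intro continuous_intros)
  then obtain p where p: "p \<in> K" "\<forall>y\<in>K. y \<bullet> u \<le> p \<bullet> u"
    using continuous_attains_sup[OF assms(1,2)] by blast
  have "d *\<^sub>R u \<in> cball 0 d" using u assms(3) by simp
  with p(1) have "p + d *\<^sub>R u \<in> parallel_body K d"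
    unfolding parallel_body_def by blast
  moreover have "p + d *\<^sub>R u \<notin> K"
  proof
    assume "p + d *\<^sub>R u \<in> K"
    then have "(p + d *\<^sub>R u) \<bullet> u \<le> p \<bullet> u" using p(2) by blast
    moreover have "(p + d *\<^sub>R u) \<bullet> u = p \<bullet> u + d"
      using u by (simp add: inner_add_left)
    ultimately show False using assms(3) by linarith
  qed
  ultimately show ?thesis by blast
qed

lemma convex_body_parallel_body:
  "convex_body K \<Longrightarrow> d \<ge> 0 \<Longrightarrow> convex_body (parallel_body K d)"
  using subset_parallel_body[of d K] compact_parallel_body convex_parallel_body
  unfolding convex_body_def by blast

definition unimodular_maps :: "real set \<Rightarrow> ((real^'n^'n) \<times> (real^'n)) set" where
  "unimodular_maps A = {(M, b). GL_int M \<and> (\<forall>i. b $ i \<in> A)}"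

lemma unimod_copy_iff:
  "unimod_copy A X Y \<longleftrightarrow> (\<exists>(M, b)\<in>unimodular_maps A. Y = (\<lambda>x. M *v x + b) ` X)"
  by (auto simp: unimod_copy_def unimodular_maps_def)

lemma closed_GL_int: "closed {M :: real^'n^'n. GL_int M}"
proof -
  have "{M :: real^'n^'n. GL_int M} = (\<Inter>i. \<Inter>j. (\<lambda>M. M $ i $ j) -` \<int>) \<inter> det -` {1, -1}"
    by (auto simp: GL_int_def)
  moreover have "continuous_on UNIV (det :: real^'n^'n \<Rightarrow> real)"
    unfolding det_def by (intro continuous_intros)
  ultimately show ?thesis
    by (simp add: closed_INT closed_Int closed_vimage continuous_on_component continuous_on_id)
qed

lemma closed_unimodular_maps:
  assumes "closed A"
  shows "closed (unimodular_maps A)"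
proof -
  have eq: "unimodular_maps A = fst -` {M. GL_int M} \<inter> (\<Inter>i. (\<lambda>p. snd p $ i) -` A)"
    by (auto simp: unimodular_maps_def)
  have "closed ((\<lambda>p :: (real^'n^'n) \<times> (real^'n). snd p $ i) -` A)" for i
    by (rule closed_vimage[OF assms]) (intro continuous_intros)
  then show ?thesis
    unfolding eq by (intro closed_Int closed_vimage_fst closed_GL_int closed_INT) blast
qed

lemma closed_affine_maps_into:
  fixes X :: "(real^'n) set" and S :: "(real^'m) set"
  assumes "closed S"
  shows "closed {(M, b). \<forall>x\<in>X. M *v x + b \<in> S}"
proof -
  have "{(M, b). \<forall>x\<in>X. M *v x + b \<in> S} = (\<Inter>x\<in>X. (\<lambda>p. fst p *v x + snd p) -` S)"
    by auto
  moreover have "continuous_on UNIV (\<lambda>p :: (real^'n^'m) \<times> (real^'m). fst p *v x + snd p)" for x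
    unfolding matrix_vector_mult_def by (intro continuous_intros)
  ultimately show ?thesis
    using assms by (simp add: closed_INT closed_vimage)
qed

lemma abs_matrix_entry_le_if_affine_bounded_on_ball:
  fixes M :: "real^'n^'m" and b :: "real^'m" and c :: "real^'n"
  assumes bound: "\<forall>x\<in>ball c r. norm (M *v x + b) \<le> D" and "r > 0"
  shows "\<bar>M $ i $ j\<bar> \<le> 2 * D / r"
proof -
  define t where "t = r / 2"
  define u :: "real^'n" where "u = axis j 1"
  have "c + t *\<^sub>R u \<in> ball c r" "c - t *\<^sub>R u \<in> ball c r"
    using \<open>r > 0\<close> by (auto simp: t_def u_def dist_norm)
  then have "\<bar>(M *v (c + t *\<^sub>R u) + b) $ i\<bar> \<le> D"
    and "\<bar>(M *v (c - t *\<^sub>R u) + b) $ i\<bar> \<le> D"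
    using bound component_le_norm_cart order_trans by blast+
  moreover have "(M *v (c + t *\<^sub>R u) + b) $ i - (M *v (c - t *\<^sub>R u) + b) $ i = 2 * t * M $ i $ j"
    by (simp add: matrix_vector_mul_component inner_add_right inner_diff_right u_def inner_axis)
  ultimately have "2 * t * \<bar>M $ i $ j\<bar> \<le> 2 * D"
    using \<open>r > 0\<close> by (simp add: t_def abs_mult)
  then show ?thesis
    using \<open>r > 0\<close> by (simp add: t_def field_simps)
qed

lemma norm_matrix_le_sum_abs_entries:
  "norm (M :: real^'n^'m) \<le> (\<Sum>i\<in>UNIV. \<Sum>j\<in>UNIV. \<bar>M $ i $ j\<bar>)"
proof -
  have "norm M \<le> (\<Sum>i\<in>UNIV. norm (M $ i))"
    unfolding norm_vec_def by (rule L2_set_le_sum) simp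
  also have "\<dots> \<le> (\<Sum>i\<in>UNIV. \<Sum>j\<in>UNIV. \<bar>M $ i $ j\<bar>)"
    by (intro sum_mono norm_le_l1_cart)
  finally show ?thesis .
qed

lemma bounded_affine_maps_bounded_on_ball:
  fixes c :: "real^'n"
  assumes "r > 0"
  shows "bounded {(M :: real^'n^'m, b :: real^'m). \<forall>x\<in>ball c r. norm (M *v x + b) \<le> D}"
    (is "bounded ?S")
proof -
  define B where "B = real CARD('m) * real CARD('n) * (2 * D / r)"
  have "M \<in> cball 0 B \<and> b \<in> cball 0 (D + B * norm c)" if "(M, b) \<in> ?S" for M b
  proof -
    from that have bound: "\<forall>x\<in>ball c r. norm (M *v x + b) \<le> D" by simp
    have entry: "\<bar>M $ i $ j\<bar> \<le> 2 * D / r" for i j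
      by (rule abs_matrix_entry_le_if_affine_bounded_on_ball[OF bound \<open>r > 0\<close>])
    have "(\<Sum>i\<in>UNIV. \<Sum>j\<in>UNIV. \<bar>M $ i $ j\<bar>)
        \<le> (\<Sum>i\<in>(UNIV::'m set). \<Sum>j\<in>(UNIV::'n set). 2 * D / r)"
      by (intro sum_mono entry)
    also have "\<dots> = B" by (simp add: B_def)
    finally have "norm M \<le> B"
      using norm_matrix_le_sum_abs_entries[of M] by linarith
    have "onorm ((*v) M) \<le> B"
      using onorm_le_matrix_component[OF entry] by (simp add: B_def)
    then have "norm (M *v c) \<le> B * norm c"
      using onorm[OF matrix_vector_mul_bounded_linear, of M c]
      by (meson mult_right_mono norm_ge_zero order_trans)
    moreover have "norm b \<le> norm (M *v c + b) + norm (M *v c)"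
      using norm_triangle_ineq4[of "M *v c + b" "M *v c"] by simp
    moreover have "norm (M *v c + b) \<le> D"
      using bound \<open>r > 0\<close> by simp
    ultimately show ?thesis
      unfolding mem_cball_0 using \<open>norm M \<le> B\<close> by linarith
  qed
  then have "?S \<subseteq> cball 0 B \<times> cball 0 (D + B * norm c)"
    by (auto simp: mem_Times_iff)
  then show ?thesis
    using bounded_Times bounded_cball bounded_subset by blast
qed

lemma unimod_copy_subset_if_subset_parallel_bodies:
  fixes K X :: "(real^'n) set"
  assumes "closed A" "compact K" "interior X \<noteq> {}"
    and near: "\<And>d. d > 0 \<Longrightarrow> \<exists>Y. unimod_copy A X Y \<and> Y \<subseteq> parallel_body K d"
  shows "\<exists>Y. unimod_copy A X Y \<and> Y \<subseteq> K"
proof -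
  obtain c where "c \<in> interior X" using assms(3) by blast
  then obtain r where "r > 0" "ball c r \<subseteq> X" unfolding mem_interior by blast
  obtain R where "\<forall>k\<in>K. norm k \<le> R"
    using compact_imp_bounded[OF assms(2)] unfolding bounded_iff by blast
  then have R: "K \<subseteq> cball 0 R" by auto
  define F where "F n = unimodular_maps A \<inter>
      {(M, b). \<forall>x\<in>X. M *v x + b \<in> parallel_body K (inverse (Suc n))}" for n :: nat
  have "compact (F n)" for n
  proof -
    \<comment> \<open>Bounded because a map is determined by its values on the ball inside X.\<close>
    have "inverse (Suc n) \<le> (1::real)" by (simp add: inverse_le_1_iff)
    then have "parallel_body K (inverse (Suc n)) \<subseteq> cball 0 (R + 1)"
      using parallel_body_subset_cball[OF R] parallel_body_mono by blast
    then have "F n \<subseteq> {(M, b). \<forall>x\<in>ball c r. norm (M *v x + b) \<le> R + 1}"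
      using \<open>ball c r \<subseteq> X\<close> by (auto simp: F_def subset_iff)
    then have "bounded (F n)"
      using bounded_affine_maps_bounded_on_ball[OF \<open>r > 0\<close>] bounded_subset by blast
    moreover have "closed (F n)"
      unfolding F_def
      by (intro closed_Int closed_unimodular_maps[OF assms(1)] closed_affine_maps_into
          compact_imp_closed compact_parallel_body assms(2))
    ultimately show ?thesis by (simp add: compact_eq_bounded_closed)
  qed
  moreover have "F n \<noteq> {}" for n
    using near[of "inverse (Suc n)"] by (force simp: F_def unimod_copy_iff)
  moreover have "F n \<subseteq> F m" if "m \<le> n" for m n
    using parallel_body_mono[of "inverse (Suc n)" "inverse (Suc m)" K] that
    by (force simp: F_def field_simps)
  ultimately obtain M b where "(M, b) \<in> (\<Inter>n. F n)"
    using compact_nest[of F] by (metis all_not_in_conv surj_pair)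
  then have "(M, b) \<in> unimodular_maps A"
    and "\<forall>x\<in>X. M *v x + b \<in> (\<Inter>n. parallel_body K (inverse (Suc n)))"
    by (auto simp: F_def)
  then show ?thesis
    unfolding unimod_copy_iff Inter_parallel_bodies[OF compact_imp_closed[OF assms(2)]] by blast
qed

lemma maximal_X_free_body_copy_in_parallel_body:
  fixes K X :: "(real^'n) set"
  assumes "convex_body K"
    and maximal: "\<forall>L. convex_body L \<and> X_free A X L \<and> K \<subseteq> L \<longrightarrow> L = K"
    and "d > 0"
  shows "\<exists>Y. unimod_copy A X Y \<and> Y \<subseteq> parallel_body K d"
proof -
  have body: "convex_body (parallel_body K d)"
    using convex_body_parallel_body[OF assms(1)] \<open>d > 0\<close> by simp
  moreover have "K \<subseteq> parallel_body K d"
    using \<open>d > 0\<close> by (simp add: subset_parallel_body)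
  moreover have "parallel_body K d \<noteq> K"
    using assms(1,3) unfolding convex_body_def by (intro parallel_body_neq_self) auto
  ultimately have "\<not> X_free A X (parallel_body K d)"
    using maximal by blast
  then show ?thesis
    using body rel_interior_subset unfolding X_free_def convex_body_def by blast
qed

theorem corollary2p8:
  fixes A :: "real set" and K X :: "(real^'n) set"
  assumes A: "A = \<int> \<or> A = UNIV"
    and K: "convex_body K" "aff_dim K = int CARD('n)"
    and X: "convex_body X" "aff_dim X = int CARD('n)"
    and free: "X_free A X K"
    and maximal: "\<forall>L. convex_body L \<and> X_free A X L \<and> K \<subseteq> L \<longrightarrow> L = K"
  shows "\<exists>Y. unimod_copy A X Y \<and> Y \<subseteq> K"
proof (rule unimod_copy_subset_if_subset_parallel_bodies)
  show "closed A" using A by auto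
  show "compact K" using K(1) by (simp add: convex_body_def)
  have "rel_interior X \<noteq> {}"
    using X(1) by (simp add: convex_body_def rel_interior_eq_empty)
  then show "interior X \<noteq> {}"
    using X(2) by (simp add: interior_rel_interior_gen)
  show "\<exists>Y. unimod_copy A X Y \<and> Y \<subseteq> parallel_body K d" if "d > 0" for d
    using maximal_X_free_body_copy_in_parallel_body[OF K(1) maximal that] .
qed

end
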